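(* (1) Let $\mathfrak{F}$ be crisp. Then $\mathfrak{F}$ is finitely branching (i.e., $R(w)$ is finite for every $w\in\mathfrak{F}$) iff $\mathfrak{F}\models_{\mathbf{K}\mathsf{biG}}\mathbf{1}\ominus\lozenge((p\ominus q)\wedge q)$. (2) Let $\mathfrak{F}$ be fuzzy. Then $\mathfrak{F}$ is finitely branching and $\sup\{wRw':wRw'<1\}<1$ for all $w\in\mathfrak{F}$ iff $\mathfrak{F}\models_{\mathbf{K}\mathsf{biG}}\mathbf{1}\ominus\lozenge((p\ominus q)\wedge q)$.
   Context: $\ominus$ is Gödel coimplication: $b\ominus_\mathsf{G}a=0$ if $b\le a$, and $b$ otherwise; $a\rightarrow_\mathsf{G}b=1$ if $a\le b$, else $b$; $\wedge_\mathsf{G}=\min$, $\vee_\mathsf{G}=\max$; $\mathbf{1}:=p\rightarrow p$. A crisp frame is $\langle W,R\rangle$ with $R\subseteq W\times W$ and $R(w)=\{w':wRw'\}$; a fuzzy frame has $R:W\times W\to[0,1]$ and $R(w)=\{w':wRw'=1\}$. A $\mathbf{K}\mathsf{biG}$ model adds $v:\mathsf{Var}\times W\to[0,1]$, extended by the Gödel operations; on fuzzy frames $v(\lozenge\phi,w)=\sup_{w'}\{wRw'\wedge_\mathsf{G}v(\phi,w')\}$ and $v(\Box\phi,w)=\inf_{w'}\{wRw'\rightarrow_\mathsf{G}v(\phi,w')\}$; on crisp frames $v(\lozenge\phi,w)=\sup\{v(\phi,w'):wRw'\}$, $v(\Box\phi,w)=\inf\{v(\phi,w'):wRw'\}$ ($\sup\varnothing=0$,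 $\inf\varnothing=1$). $\mathfrak{F}\models_{\mathbf{K}\mathsf{biG}}\phi$ iff $v(\phi,w)=1$ for all $w$ and all models on $\mathfrak{F}$. *)

theory Defs
  imports Main "HOL.Real"
begin

datatype fm = Var nat | Bot | Top | And fm fm | Or fm fm | Imp fm fm | Coimp fm fm
  | Box fm | Dia fm

definition gimp :: "real \<Rightarrow> real \<Rightarrow> real" where
  "gimp a b = (if a \<le> b then 1 else b)"
definition gcoimp :: "real \<Rightarrow> real \<Rightarrow> real" where
  "gcoimp b a = (if b \<le> a then 0 else b)"

definition gsup :: "real set \<Rightarrow> real" where
  "gsup S = (if S = {} then 0 else Sup S)"
definition ginf :: "real set \<Rightarrow> real" where
  "ginf S = (if S = {} then 1 else Inf S)"

fun cval :: "('w \<Rightarrow> 'w \<Rightarrow> bool) \<Rightarrow> (nat \<Rightarrow> 'w \<Rightarrow> real) \<Rightarrow> fm \<Rightarrow> 'w \<Rightarrow> real" where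
  "cval R v (Var p) w = v p w"
| "cval R v Bot w = 0"
| "cval R v Top w = 1"
| "cval R v (And a b) w = min (cval R v a w) (cval R v b w)"
| "cval R v (Or a b) w = max (cval R v a w) (cval R v b w)"
| "cval R v (Imp a b) w = gimp (cval R v a w) (cval R v b w)"
| "cval R v (Coimp a b) w = gcoimp (cval R v a w) (cval R v b w)"
| "cval R v (Dia a) w = gsup {cval R v a w' | w'. R w w'}"
| "cval R v (Box a) w = ginf {cval R v a w' | w'. R w w'}"

fun fval :: "('w \<Rightarrow> 'w \<Rightarrow> real) \<Rightarrow> (nat \<Rightarrow> 'w \<Rightarrow> real) \<Rightarrow> fm \<Rightarrow> 'w \<Rightarrow> real" where
  "fval R v (Var p) w = v p w"
| "fval R v Bot w = 0"
| "fval R v Top w = 1"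
| "fval R v (And a b) w = min (fval R v a w) (fval R v b w)"
| "fval R v (Or a b) w = max (fval R v a w) (fval R v b w)"
| "fval R v (Imp a b) w = gimp (fval R v a w) (fval R v b w)"
| "fval R v (Coimp a b) w = gcoimp (fval R v a w) (fval R v b w)"
| "fval R v (Dia a) w = gsup {min (R w w') (fval R v a w') | w'. True}"
| "fval R v (Box a) w = ginf {gimp (R w w') (fval R v a w') | w'. True}"

definition valuation :: "(nat \<Rightarrow> 'w \<Rightarrow> real) \<Rightarrow> bool" where
  "valuation v \<longleftrightarrow> (\<forall>p w. 0 \<le> v p w \<and> v p w \<le> 1)"

definition fuzzy_frame :: "('w \<Rightarrow> 'w \<Rightarrow> real) \<Rightarrow> bool" where
  "fuzzy_frame R \<longleftrightarrow> (\<forall>w w'. 0 \<le> R w w' \<and> R w w' \<le> 1)"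

definition crisp_valid :: "('w \<Rightarrow> 'w \<Rightarrow> bool) \<Rightarrow> fm \<Rightarrow> bool" where
  "crisp_valid R \<phi> \<longleftrightarrow> (\<forall>v. valuation v \<longrightarrow> (\<forall>w. cval R v \<phi> w = 1))"

definition fuzzy_valid :: "('w \<Rightarrow> 'w \<Rightarrow> real) \<Rightarrow> fm \<Rightarrow> bool" where
  "fuzzy_valid R \<phi> \<longleftrightarrow> (\<forall>v. valuation v \<longrightarrow> (\<forall>w. fval R v \<phi> w = 1))"

text \<open>R(w) = successors; for fuzzy frames those with degree exactly 1\<close>
definition crisp_fin_branching :: "('w \<Rightarrow> 'w \<Rightarrow> bool) \<Rightarrow> bool" where
  "crisp_fin_branching R \<longleftrightarrow> (\<forall>w. finite {w'. R w w'})"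

definition fuzzy_fin_branching :: "('w \<Rightarrow> 'w \<Rightarrow> real) \<Rightarrow> bool" where
  "fuzzy_fin_branching R \<longleftrightarrow> (\<forall>w. finite {w'. R w w' = 1})"

definition one_fm :: fm where "one_fm = Imp (Var 0) (Var 0)"

definition fb_formula :: fm where
  "fb_formula = Coimp one_fm (Dia (And (Coimp (Var 0) (Var 1)) (Var 1)))"

end

(*
  The formula 1 \<ominus> \<diamond>((p \<ominus> q) \<and> q) is crisp: it is 1 at w when the supremum computed by
  the diamond is below 1, and 0 otherwise. The body (p \<ominus> q) \<and> q never reaches 1, and for
  p = 1 it equals q whenever q < 1; so its possible values are exactly the functions into
  [0,1). Validity thus says that every [0,1)-valued function has supremum below 1 over R(w)
  (crisp case), respectively after taking minima with the degrees wRw' (fuzzy case).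
  A maximum over a finite set stays below 1, while along an infinite sequence of successors
  the values 1 - 1/(n+1) push the supremum up to 1. In the fuzzy case the successors of
  degree 1 behave as in the crisp case, and the remaining ones contribute exactly
  sup{wRw' | wRw' < 1}, which is reached by letting q copy those degrees.
*)
theory Submission
  imports Defs Complex_Main
begin

lemma gsup_upper: "x \<in> S \<Longrightarrow> bdd_above S \<Longrightarrow> x \<le> gsup S"
  unfolding gsup_def by (auto intro: cSup_upper)

lemma gsup_least: "0 \<le> m \<Longrightarrow> (\<And>x. x \<in> S \<Longrightarrow> x \<le> m) \<Longrightarrow> gsup S \<le> m"
  unfolding gsup_def by (auto intro: cSup_least)

lemma gsup_nonneg:
  assumes "bdd_above S" "\<And>x. x \<in> S \<Longrightarrow> 0 \<le> x"
  shows "0 \<le> gsup S"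
proof (cases "S = {}")
  case False
  then obtain x where "x \<in> S" by blast
  then show ?thesis
    using assms by (meson gsup_upper order_trans)
qed (simp add: gsup_def)

lemma gsup_mono:
  assumes "S \<subseteq> T" "bdd_above T" "\<And>x. x \<in> T \<Longrightarrow> 0 \<le> x"
  shows "gsup S \<le> gsup T"
  using assms by (intro gsup_least gsup_nonneg) (auto intro: gsup_upper)

lemma gsup_finite_less: "finite S \<Longrightarrow> 0 < c \<Longrightarrow> (\<And>x. x \<in> S \<Longrightarrow> x < c) \<Longrightarrow> gsup S < c"
  unfolding gsup_def by (auto simp: cSup_eq_Max)

lemma infinite_imp_gsup_image_ge_one:
  assumes "infinite A"
  shows "\<exists>f. range f \<subseteq> {0..<1} \<and> 1 \<le> gsup (f ` A)"
proof -
  obtain g :: "nat \<Rightarrow> 'a" where g: "inj g" "range g \<subseteq> A"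
    using infinite_countable_subset[OF assms] by blast
  define f where "f x = 1 + - inverse (real (Suc (inv g x)))" for x
  have f_range: "range f \<subseteq> {0..<1}"
    by (auto simp: f_def field_simps)
  have "bdd_above (f ` A)"
    using f_range by (intro bdd_aboveI[of _ 1]) (auto simp: image_subset_iff less_imp_le)
  then have "f (g n) \<le> gsup (f ` A)" for n
    using g(2) by (intro gsup_upper) auto
  then have "1 + - inverse (real (Suc n)) \<le> gsup (f ` A)" for n
    using g(1) by (simp add: f_def)
  then have "1 \<le> gsup (f ` A)"
    by (intro LIMSEQ_le_const2[OF LIMSEQ_inverse_real_of_nat_add_minus]) auto
  with f_range show ?thesis by blast
qed

lemma finite_iff_gsup_image_less_one:
  "finite A \<longleftrightarrow> (\<forall>f. range f \<subseteq> {0..<1} \<longrightarrow> gsup (f ` A) < (1::real))"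
proof
  show "\<forall>f. range f \<subseteq> {0..<1} \<longrightarrow> gsup (f ` A) < 1" if "finite A"
    using that by (auto simp: image_subset_iff intro: gsup_finite_less)
  show "finite A" if "\<forall>f. range f \<subseteq> {0..<1} \<longrightarrow> gsup (f ` A) < 1"
    using that infinite_imp_gsup_image_ge_one[of A] by (meson not_le)
qed

lemma gsup_min_less_one:
  fixes r f :: "'a \<Rightarrow> real"
  assumes r: "range r \<subseteq> {0..1}" and f: "range f \<subseteq> {0..<1}"
    and fin: "finite {x. r x = 1}" and gap: "gsup {r x | x. r x < 1} < 1"
  shows "gsup (range (\<lambda>x. min (r x) (f x))) < 1"
proof -
  define m where "m = max (gsup (f ` {x. r x = 1})) (gsup {r x | x. r x < 1})"
  have "gsup (f ` {x. r x = 1}) < 1"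
    using fin f by (intro gsup_finite_less) (auto simp: image_subset_iff)
  then have "m < 1"
    using gap by (simp add: m_def)
  moreover have "gsup (range (\<lambda>x. min (r x) (f x))) \<le> m"
  proof (rule gsup_least)
    have bdd_gap: "bdd_above {r x | x. r x < 1}"
      by (rule bdd_aboveI[of _ 1]) auto
    have "0 \<le> gsup {r x | x. r x < 1}"
      using r bdd_gap by (intro gsup_nonneg) (auto simp: image_subset_iff)
    then show "0 \<le> m"
      by (simp add: m_def)
    fix y assume "y \<in> range (\<lambda>x. min (r x) (f x))"
    then obtain x where y: "y = min (r x) (f x)"
      by blast
    show "y \<le> m"
    proof (cases "r x = 1")
      case True
      have "bdd_above (f ` {x. r x = 1})"
        using f by (intro bdd_aboveI[of _ 1]) (auto simp: image_subset_iff less_imp_le)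
      then have "f x \<le> gsup (f ` {x. r x = 1})"
        using True by (intro gsup_upper) auto
      then show ?thesis
        unfolding y m_def by linarith
    next
      case False
      then have "r x < 1"
        using r by (auto simp: image_subset_iff less_le)
      then have "r x \<le> gsup {r x | x. r x < 1}"
        using bdd_gap by (intro gsup_upper) auto
      then show ?thesis
        unfolding y m_def by linarith
    qed
  qed
  ultimately show ?thesis
    by linarith
qed

lemma finite_level_one_and_gsup_below_iff:
  fixes r :: "'a \<Rightarrow> real"
  assumes r: "range r \<subseteq> {0..1}"
  shows "(finite {x. r x = 1} \<and> gsup {r x | x. r x < 1} < 1) \<longleftrightarrow>
    (\<forall>f. range f \<subseteq> {0..<1} \<longrightarrow> gsup (range (\<lambda>x. min (r x) (f x))) < 1)"
    (is "_ \<longleftrightarrow> (\<forall>f. range f \<subseteq> {0..<1} \<longrightarrow> gsup (?M f) < 1)")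
proof (intro iffI allI impI conjI)
  show "gsup (?M f) < 1" if "finite {x. r x = 1} \<and> gsup {r x | x. r x < 1} < 1"
    and "range f \<subseteq> {0..<1}" for f
    using that r by (intro gsup_min_less_one) auto
  assume below: "\<forall>f. range f \<subseteq> {0..<1} \<longrightarrow> gsup (?M f) < 1"
  have gsup_le_M: "gsup S \<le> gsup (?M f)" if "S \<subseteq> ?M f" "range f \<subseteq> {0..<1}" for S f
    using that r by (intro gsup_mono bdd_aboveI[of _ 1]) (auto simp: image_subset_iff min_le_iff_disj)
  show "finite {x. r x = 1}"
    unfolding finite_iff_gsup_image_less_one
  proof (intro allI impI)
    fix f :: "'a \<Rightarrow> real"
    assume f: "range f \<subseteq> {0..<1}"
    have "f ` {x. r x = 1} \<subseteq> ?M f"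
    proof (rule image_subsetI)
      fix x assume "x \<in> {x. r x = 1}"
      then have "f x = min (r x) (f x)"
        using f by (auto simp: image_subset_iff less_imp_le)
      then show "f x \<in> ?M f"
        by (rule range_eqI)
    qed
    then show "gsup (f ` {x. r x = 1}) < 1"
      using below f gsup_le_M[OF _ f] by (meson le_less_trans)
  qed
  define f where "f x = (if r x < 1 then r x else 0)" for x
  have f: "range f \<subseteq> {0..<1}"
    using r by (auto simp: f_def image_subset_iff)
  have "r x = min (r x) (f x)" if "r x < 1" for x
    using that by (simp add: f_def)
  then have "{r x | x. r x < 1} \<subseteq> ?M f"
    by (auto intro: range_eqI)
  then show "gsup {r x | x. r x < 1} < 1"
    using below f gsup_le_M[OF _ f] by (meson le_less_trans)
qed

definition fb_body :: "(nat \<Rightarrow> 'w \<Rightarrow> real) \<Rightarrow> 'w \<Rightarrow> real" where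
  "fb_body v x = min (gcoimp (v 0 x) (v 1 x)) (v 1 x)"

lemma fb_body_range: "{fb_body v | v. valuation v} = {f :: 'w \<Rightarrow> real. range f \<subseteq> {0..<1}}"
proof (intro equalityI subsetI)
  fix f assume "f \<in> {fb_body v | v. valuation v}"
  then obtain v where "valuation v" "f = fb_body v"
    by blast
  then have v_bounds: "0 \<le> v 1 x \<and> v 0 x \<le> 1" for x
    by (simp add: valuation_def)
  have "fb_body v x \<in> {0..<1}" for x
    using v_bounds[of x] by (auto simp: fb_body_def gcoimp_def)
  then show "f \<in> {f. range f \<subseteq> {0..<1}}"
    using \<open>f = fb_body v\<close> by blast
next
  fix f :: "'w \<Rightarrow> real"
  assume f: "f \<in> {f. range f \<subseteq> {0..<1}}"
  define v where "v (n::nat) = (if n = 0 then (\<lambda>_. 1) else f)" for n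
  have f_bounds: "0 \<le> f x \<and> f x < 1" for x
    using f by (auto simp: image_subset_iff)
  have "valuation v"
    using f_bounds by (simp add: v_def valuation_def less_imp_le)
  moreover have "fb_body v = f"
  proof
    show "fb_body v x = f x" for x
      using f_bounds[of x] by (simp add: v_def fb_body_def gcoimp_def)
  qed
  ultimately show "f \<in> {fb_body v | v. valuation v}"
    by blast
qed

lemma cval_fb_formula:
  "cval R v fb_formula w = (if gsup (fb_body v ` {w'. R w w'}) < 1 then 1 else 0)"
proof -
  have "{cval R v (And (Coimp (Var 0) (Var 1)) (Var 1)) w' | w'. R w w'} = fb_body v ` {w'. R w w'}"
    by (auto simp: fb_body_def)
  then show ?thesis
    by (simp add: fb_formula_def one_fm_def gimp_def gcoimp_def)
qed

lemma fval_fb_formula: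
  "fval R v fb_formula w = (if gsup (range (\<lambda>x. min (R w x) (fb_body v x))) < 1 then 1 else 0)"
proof -
  have "{min (R w w') (fval R v (And (Coimp (Var 0) (Var 1)) (Var 1)) w') | w'. True}
      = range (\<lambda>x. min (R w x) (fb_body v x))"
    by (auto simp: fb_body_def)
  then show ?thesis
    by (simp add: fb_formula_def one_fm_def gimp_def gcoimp_def)
qed

lemma crisp_valid_fb_formula_iff:
  "crisp_valid R fb_formula \<longleftrightarrow>
    (\<forall>f. range f \<subseteq> {0..<1} \<longrightarrow> (\<forall>w. gsup (f ` {w'. R w w'}) < 1))"
proof -
  have "crisp_valid R fb_formula \<longleftrightarrow>
      (\<forall>f \<in> {fb_body v | v. valuation v}. \<forall>w. gsup (f ` {w'. R w w'}) < 1)"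
    by (auto simp: crisp_valid_def cval_fb_formula)
  then show ?thesis
    unfolding fb_body_range by blast
qed

lemma fuzzy_valid_fb_formula_iff:
  "fuzzy_valid R fb_formula \<longleftrightarrow>
    (\<forall>f. range f \<subseteq> {0..<1} \<longrightarrow> (\<forall>w. gsup (range (\<lambda>x. min (R w x) (f x))) < 1))"
proof -
  have "fuzzy_valid R fb_formula \<longleftrightarrow>
      (\<forall>f \<in> {fb_body v | v. valuation v}. \<forall>w. gsup (range (\<lambda>x. min (R w x) (f x))) < 1)"
    by (auto simp: fuzzy_valid_def fval_fb_formula)
  then show ?thesis
    unfolding fb_body_range by blast
qed

theorem theorem2:
  shows "(\<forall>R :: 'w \<Rightarrow> 'w \<Rightarrow> bool.
            crisp_fin_branching R \<longleftrightarrow> crisp_valid R fb_formula)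
       \<and> (\<forall>R :: 'w \<Rightarrow> 'w \<Rightarrow> real. fuzzy_frame R \<longrightarrow>
            ((fuzzy_fin_branching R \<and> (\<forall>w. gsup {R w w' | w'. R w w' < 1} < 1))
              \<longleftrightarrow> fuzzy_valid R fb_formula))"
proof (intro conjI allI impI)
  fix R :: "'w \<Rightarrow> 'w \<Rightarrow> bool"
  show "crisp_fin_branching R \<longleftrightarrow> crisp_valid R fb_formula"
    unfolding crisp_fin_branching_def crisp_valid_fb_formula_iff finite_iff_gsup_image_less_one
    by blast
next
  fix R :: "'w \<Rightarrow> 'w \<Rightarrow> real"
  assume "fuzzy_frame R"
  then have "finite {w'. R w w' = 1} \<and> gsup {R w w' | w'. R w w' < 1} < 1 \<longleftrightarrow>
      (\<forall>f. range f \<subseteq> {0..<1} \<longrightarrow> gsup (range (\<lambda>x. min (R w x) (f x))) < 1)" for w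
    by (intro finite_level_one_and_gsup_below_iff) (auto simp: fuzzy_frame_def)
  then show "(fuzzy_fin_branching R \<and> (\<forall>w. gsup {R w w' | w'. R w w' < 1} < 1))
      \<longleftrightarrow> fuzzy_valid R fb_formula"
    unfolding fuzzy_fin_branching_def fuzzy_valid_fb_formula_iff by blast
qed

end
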